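(* Let $S$ and $T$ be asynchronous automaton semigroups. Then the normal ideal extension of $S$ by $T$ is an asynchronous automaton semigroup.
   Context: An asynchronous automaton is $(Q,\Sigma,t,o)$ with $Q$ a finite set of states, $\Sigma$ a finite alphabet, $t:Q\times\Sigma\to Q$ and $o:Q\times\Sigma\to\Sigma^*$. Each state $q$ induces $q:\Sigma^*\to\Sigma^*$ by $q(\emptyset)=\emptyset$, $q(\sigma w)=o(q,\sigma)\,q'(w)$ with $q'=t(q,\sigma)$; an asynchronous automaton semigroup is (a semigroup isomorphic to) the semigroup of maps generated under composition by the states. For semigroups $S,T$, the normal ideal extension of $S$ by $T$ is the disjoint union $S\sqcup T$ with product $x\cdot y=xy$ if $x,y\in S$ or $x,y\in T$, $x\cdot y=y$ if $x\in S,y\in T$, and $x\cdot y=x$ if $x\in T,y\in S$. *)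

theory Defs
  imports Main "HOL-Library.FuncSet"
begin

definition async_automaton ::
  "nat set \<Rightarrow> nat set \<Rightarrow> (nat \<Rightarrow> nat \<Rightarrow> nat) \<Rightarrow> (nat \<Rightarrow> nat \<Rightarrow> nat list) \<Rightarrow> bool" where
  "async_automaton Q Sig t out \<longleftrightarrow> finite Q \<and> finite Sig \<and>
     (\<forall>q\<in>Q. \<forall>a\<in>Sig. t q a \<in> Q \<and> set (out q a) \<subseteq> Sig)"

fun act :: "(nat \<Rightarrow> nat \<Rightarrow> nat) \<Rightarrow> (nat \<Rightarrow> nat \<Rightarrow> nat list) \<Rightarrow> nat \<Rightarrow> nat list \<Rightarrow> nat list" where
  "act t out q [] = []"
| "act t out q (a # w) = out q a @ act t out (t q a) w"

inductive_set sgen :: "'a set \<Rightarrow> ('a \<Rightarrow> 'a \<Rightarrow> 'a) \<Rightarrow> 'a set" for G f where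
  base: "x \<in> G \<Longrightarrow> x \<in> sgen G f"
| step: "x \<in> sgen G f \<Longrightarrow> y \<in> sgen G f \<Longrightarrow> f x y \<in> sgen G f"

definition aut_sgp_carrier ::
  "nat set \<Rightarrow> nat set \<Rightarrow> (nat \<Rightarrow> nat \<Rightarrow> nat) \<Rightarrow> (nat \<Rightarrow> nat \<Rightarrow> nat list) \<Rightarrow> (nat list \<Rightarrow> nat list) set" where
  "aut_sgp_carrier Q Sig t out =
     sgen ((\<lambda>q. restrict (act t out q) (lists Sig)) ` Q) (\<lambda>f g. compose (lists Sig) f g)"

definition sg_iso :: "'a set \<Rightarrow> ('a \<Rightarrow> 'a \<Rightarrow> 'a) \<Rightarrow> 'b set \<Rightarrow> ('b \<Rightarrow> 'b \<Rightarrow> 'b) \<Rightarrow> ('a \<Rightarrow> 'b) \<Rightarrow> bool" where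
  "sg_iso A f B g h \<longleftrightarrow> bij_betw h A B \<and> (\<forall>x\<in>A. \<forall>y\<in>A. h (f x y) = g (h x) (h y))"

definition is_async_aut_sgp :: "'a set \<Rightarrow> ('a \<Rightarrow> 'a \<Rightarrow> 'a) \<Rightarrow> bool" where
  "is_async_aut_sgp A f \<longleftrightarrow> (\<exists>Q Sig t out h. async_automaton Q Sig t out \<and>
     sg_iso A f (aut_sgp_carrier Q Sig t out) (\<lambda>x y. compose (lists Sig) x y) h)"

(* product of the normal ideal extension of S (Inl) by T (Inr); carrier is S <+> T *)
fun nie_mult :: "('a \<Rightarrow> 'a \<Rightarrow> 'a) \<Rightarrow> ('b \<Rightarrow> 'b \<Rightarrow> 'b) \<Rightarrow> 'a + 'b \<Rightarrow> 'a + 'b \<Rightarrow> 'a + 'b" where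
  "nie_mult fS fT (Inl x) (Inl y) = Inl (fS x y)"
| "nie_mult fS fT (Inr x) (Inr y) = Inr (fT x y)"
| "nie_mult fS fT (Inl x) (Inr y) = Inr y"
| "nie_mult fS fT (Inr x) (Inl y) = Inr x"

end

theory Submission
  imports Defs
begin

(*
  Let S and T be realised by automata with states Q1, Q2 over alphabets Sig1, Sig2.  We build
  one automaton over the alphabet {#} + Sig1 + Sig2 with states Q1 + Q2 (everything coded in
  the naturals by parity):
    - a state of Q1 acts as before on Sig1-letters and copies # and the Sig2-letters;
    - a state of Q2 acts as before on Sig2-letters and deletes # and the Sig1-letters.
  A Q2-state thus outputs only Sig2-letters, which Q1-states leave alone, and Q1-states do not
  change the Sig2-subword that Q2-states read.  Hence (maps being composed "f after g") a map
  of S followed or preceded by a map of T is absorbed into the latter, which is precisely the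
  multiplication of the normal ideal extension; the one-letter word # (fixed by S-maps, erased
  by T-maps) keeps the two kinds of maps apart.
*)

section \<open>Semigroup isomorphisms\<close>

lemma sg_iso_trans:
  assumes "sg_iso A f B g h" and "sg_iso B g C k h'"
  shows "sg_iso A f C k (h' \<circ> h)"
proof -
  have "h x \<in> B" if "x \<in> A" for x
    using assms that unfolding sg_iso_def by (blast dest: bij_betw_apply)
  then show ?thesis
    using assms unfolding sg_iso_def by (auto intro: bij_betw_trans)
qed

lemma sg_iso_nie:
  assumes "sg_iso S fS A fA h1" and "sg_iso T fT B fB h2"
  shows "sg_iso (S <+> T) (nie_mult fS fT) (A <+> B) (nie_mult fA fB) (map_sum h1 h2)"
proof -
  have b1: "inj_on h1 S" "h1 ` S = A" and b2: "inj_on h2 T" "h2 ` T = B"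
    using assms unfolding sg_iso_def bij_betw_def by auto
  have hom1: "\<And>x y. x \<in> S \<Longrightarrow> y \<in> S \<Longrightarrow> h1 (fS x y) = fA (h1 x) (h1 y)"
    and hom2: "\<And>x y. x \<in> T \<Longrightarrow> y \<in> T \<Longrightarrow> h2 (fT x y) = fB (h2 x) (h2 y)"
    using assms unfolding sg_iso_def by auto
  have "inj_on (map_sum h1 h2) (S <+> T)"
  proof (rule inj_onI)
    fix x y assume "x \<in> S <+> T" "y \<in> S <+> T" "map_sum h1 h2 x = map_sum h1 h2 y"
    then show "x = y" using b1(1) b2(1) by (auto elim!: PlusE dest: inj_onD)
  qed
  moreover have "map_sum h1 h2 ` (S <+> T) = A <+> B"
    unfolding b1(2)[symmetric] b2(2)[symmetric] by force
  moreover have "map_sum h1 h2 (nie_mult fS fT x y) = nie_mult fA fB (map_sum h1 h2 x) (map_sum h1 h2 y)"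
    if "x \<in> S <+> T" "y \<in> S <+> T" for x y
    using that hom1 hom2 by (cases x; cases y) auto
  ultimately show ?thesis unfolding sg_iso_def bij_betw_def by blast
qed

section \<open>Words of states\<close>

fun tstar :: "(nat \<Rightarrow> nat \<Rightarrow> nat) \<Rightarrow> nat \<Rightarrow> nat list \<Rightarrow> nat" where
  "tstar t q [] = q"
| "tstar t q (a # u) = tstar t (t q a) u"

lemma act_append: "act t out q (u @ v) = act t out q u @ act t out (tstar t q u) v"
  by (induction u arbitrary: q) auto

definition actL :: "(nat \<Rightarrow> nat \<Rightarrow> nat) \<Rightarrow> (nat \<Rightarrow> nat \<Rightarrow> nat list) \<Rightarrow> nat list \<Rightarrow> nat list \<Rightarrow> nat list" where
  "actL t out qs w = foldr (act t out) qs w"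

lemma actL_Nil [simp]: "actL t out [] w = w"
  by (simp add: actL_def)

lemma actL_Cons [simp]: "actL t out (q # qs) w = act t out q (actL t out qs w)"
  by (simp add: actL_def)

lemma actL_append: "actL t out (qs @ qs') w = actL t out qs (actL t out qs' w)"
  by (simp add: actL_def)

lemma actL_empty [simp]: "actL t out qs [] = []"
  by (induction qs) simp_all

lemma actL_single [simp]: "actL t out [q] = act t out q"
  by (rule ext) simp

(* new word of states after the composite map of qs has read the letter a; the letter is
   passed from the last state to the first, each state reading the output of the next *)
fun tL :: "(nat \<Rightarrow> nat \<Rightarrow> nat) \<Rightarrow> (nat \<Rightarrow> nat \<Rightarrow> nat list) \<Rightarrow> nat list \<Rightarrow> nat \<Rightarrow> nat list" where
  "tL t out [] a = []"
| "tL t out (q # qs) a = tstar t q (actL t out qs [a]) # tL t out qs a"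

lemma actL_letter: "actL t out qs (a # u) = actL t out qs [a] @ actL t out (tL t out qs a) u"
  by (induction qs) (simp_all add: act_append)

lemma act_lists:
  assumes "async_automaton Q Sig t out" "q \<in> Q" "w \<in> lists Sig"
  shows "act t out q w \<in> lists Sig"
  using assms(2,3)
proof (induction w arbitrary: q)
  case (Cons a w)
  then have "t q a \<in> Q" "set (out q a) \<subseteq> Sig"
    using assms(1) unfolding async_automaton_def by auto
  then show ?case using Cons by auto
qed simp

lemma actL_lists:
  "async_automaton Q Sig t out \<Longrightarrow> set qs \<subseteq> Q \<Longrightarrow> w \<in> lists Sig \<Longrightarrow> actL t out qs w \<in> lists Sig"
  by (induction qs) (simp_all add: act_lists)

abbreviation seq_map :: "nat set \<Rightarrow> (nat \<Rightarrow> nat \<Rightarrow> nat) \<Rightarrow> (nat \<Rightarrow> nat \<Rightarrow> nat list) \<Rightarrow> nat list \<Rightarrow> nat list \<Rightarrow> nat list" where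
  "seq_map Sig t out qs \<equiv> restrict (actL t out qs) (lists Sig)"

lemma compose_restrict:
  "(\<And>w. w \<in> A \<Longrightarrow> g w \<in> A) \<Longrightarrow> compose A (restrict f A) (restrict g A) = restrict (\<lambda>w. f (g w)) A"
  by (auto simp: compose_def fun_eq_iff)

lemma compose_seq_map:
  assumes "async_automaton Q Sig t out" "set qs' \<subseteq> Q"
  shows "compose (lists Sig) (seq_map Sig t out qs) (seq_map Sig t out qs') = seq_map Sig t out (qs @ qs')"
  using actL_lists[OF assms] by (subst compose_restrict) (auto simp: actL_append)

lemma carrier_eq:
  assumes aut: "async_automaton Q Sig t out"
  shows "aut_sgp_carrier Q Sig t out = {seq_map Sig t out qs | qs. qs \<noteq> [] \<and> set qs \<subseteq> Q}"
proof (intro equalityI subsetI)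
  fix f assume "f \<in> aut_sgp_carrier Q Sig t out"
  then show "f \<in> {seq_map Sig t out qs | qs. qs \<noteq> [] \<and> set qs \<subseteq> Q}"
    unfolding aut_sgp_carrier_def
  proof (induction rule: sgen.induct)
    case (base x)
    then obtain q where "q \<in> Q" "x = restrict (act t out q) (lists Sig)" by blast
    then show ?case by (intro CollectI exI[of _ "[q]"]) simp
  next
    case (step x y)
    then obtain qs qs' where qs: "qs \<noteq> []" "set qs \<subseteq> Q" "x = seq_map Sig t out qs"
      and qs': "set qs' \<subseteq> Q" "y = seq_map Sig t out qs'" by blast
    have "compose (lists Sig) x y = seq_map Sig t out (qs @ qs')"
      unfolding qs(3) qs'(2) by (rule compose_seq_map[OF aut qs'(1)])
    moreover have "qs @ qs' \<noteq> []" "set (qs @ qs') \<subseteq> Q" using qs(1,2) qs'(1) by auto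
    ultimately show ?case by blast
  qed
next
  fix f assume "f \<in> {seq_map Sig t out qs | qs. qs \<noteq> [] \<and> set qs \<subseteq> Q}"
  then obtain qs where "qs \<noteq> []" "set qs \<subseteq> Q" "f = seq_map Sig t out qs" by blast
  then show "f \<in> aut_sgp_carrier Q Sig t out"
  proof (induction qs arbitrary: f)
    case (Cons q qs)
    have gen: "seq_map Sig t out [q] \<in> aut_sgp_carrier Q Sig t out"
      using Cons.prems unfolding aut_sgp_carrier_def by (auto intro: sgen.base)
    show ?case
    proof (cases "qs = []")
      case True
      then show ?thesis using gen Cons.prems(3) by (simp only: actL_single)
    next
      case False
      have qs: "set qs \<subseteq> Q" using Cons.prems(2) by simp
      then have f: "compose (lists Sig) (seq_map Sig t out [q]) (seq_map Sig t out qs) = f"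
        unfolding Cons.prems(3) using compose_seq_map[OF aut] by (metis append_Cons append_Nil)
      have "seq_map Sig t out qs \<in> aut_sgp_carrier Q Sig t out"
        using qs by (rule Cons.IH[OF False _ refl])
      then have "compose (lists Sig) (seq_map Sig t out [q]) (seq_map Sig t out qs) \<in> aut_sgp_carrier Q Sig t out"
        using gen unfolding aut_sgp_carrier_def by (rule sgen.step[rotated])
      then show ?thesis by (simp only: f)
    qed
  qed simp
qed

lemma carrier_lists:
  "async_automaton Q Sig t out \<Longrightarrow> f \<in> aut_sgp_carrier Q Sig t out \<Longrightarrow> w \<in> lists Sig \<Longrightarrow> f w \<in> lists Sig"
proof -
  assume aut: "async_automaton Q Sig t out" and "f \<in> aut_sgp_carrier Q Sig t out" and w: "w \<in> lists Sig"
  then obtain qs where "set qs \<subseteq> Q" "f = seq_map Sig t out qs"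
    unfolding carrier_eq[OF aut] by blast
  then show "f w \<in> lists Sig" using actL_lists[OF aut _ w] w by simp
qed

lemma carrier_extensional:
  "async_automaton Q Sig t out \<Longrightarrow> f \<in> aut_sgp_carrier Q Sig t out \<Longrightarrow> f \<in> extensional (lists Sig)"
  by (auto simp: carrier_eq)

section \<open>The combined automaton\<close>

(* Letters: 0 is the separator #, a letter a of Sig1 becomes 2a+1, a letter b of Sig2 becomes 2b+2.
   States: a state q of the first automaton becomes 2q, a state p of the second becomes 2p+1. *)
definition codeS :: "nat \<Rightarrow> nat" where "codeS a = 2 * a + 1"
definition codeT :: "nat \<Rightarrow> nat" where "codeT b = 2 * b + 2"

(* the decoded Sig2-subword of a coded word *)
definition projT :: "nat list \<Rightarrow> nat list" where
  "projT w = map (\<lambda>x. x div 2 - 1) (filter (\<lambda>x. even x \<and> x \<noteq> 0) w)"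

definition ext_alph :: "nat set \<Rightarrow> nat set \<Rightarrow> nat set" where
  "ext_alph Sig1 Sig2 = insert 0 (codeS ` Sig1 \<union> codeT ` Sig2)"

definition ext_states :: "nat set \<Rightarrow> nat set \<Rightarrow> nat set" where
  "ext_states Q1 Q2 = (\<lambda>q. 2 * q) ` Q1 \<union> (\<lambda>p. 2 * p + 1) ` Q2"

lemma even_state: "n \<in> ext_states Q1 Q2 \<Longrightarrow> even n \<Longrightarrow> n div 2 \<in> Q1"
  and odd_state: "n \<in> ext_states Q1 Q2 \<Longrightarrow> odd n \<Longrightarrow> n div 2 \<in> Q2"
  by (auto simp: ext_states_def)

definition ext_trans :: "(nat \<Rightarrow> nat \<Rightarrow> nat) \<Rightarrow> (nat \<Rightarrow> nat \<Rightarrow> nat) \<Rightarrow> nat \<Rightarrow> nat \<Rightarrow> nat" where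
  "ext_trans t1 t2 n x =
     (if even n then (if odd x then 2 * t1 (n div 2) (x div 2) else n)
      else (if even x \<and> x \<noteq> 0 then 2 * t2 (n div 2) (x div 2 - 1) + 1 else n))"

definition ext_out :: "(nat \<Rightarrow> nat \<Rightarrow> nat list) \<Rightarrow> (nat \<Rightarrow> nat \<Rightarrow> nat list) \<Rightarrow> nat \<Rightarrow> nat \<Rightarrow> nat list" where
  "ext_out o1 o2 n x =
     (if even n then (if odd x then map codeS (o1 (n div 2) (x div 2)) else [x])
      else (if even x \<and> x \<noteq> 0 then map codeT (o2 (n div 2) (x div 2 - 1)) else []))"

lemma projT_Nil [simp]: "projT [] = []"
  by (simp add: projT_def)

lemma projT_Cons [simp]: "projT (x # w) = (if even x \<and> x \<noteq> 0 then [x div 2 - 1] else []) @ projT w"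
  by (simp add: projT_def)

lemma projT_append [simp]: "projT (u @ v) = projT u @ projT v"
  by (simp add: projT_def)

lemma projT_codeS [simp]: "projT (map codeS u) = []"
  by (induction u) (simp_all add: codeS_def)

lemma projT_codeT [simp]: "projT (map codeT u) = u"
  by (induction u) (simp_all add: codeT_def)

lemma even_codeT: "x \<in> set (map codeT u) \<Longrightarrow> even x"
  by (auto simp: codeT_def)

lemma codeS_in_ext_alph: "u \<in> lists Sig1 \<Longrightarrow> map codeS u \<in> lists (ext_alph Sig1 Sig2)"
  by (auto simp: ext_alph_def)

lemma codeT_in_ext_alph: "u \<in> lists Sig2 \<Longrightarrow> map codeT u \<in> lists (ext_alph Sig1 Sig2)"
  by (auto simp: ext_alph_def)

lemma odd_letter: "x \<in> ext_alph Sig1 Sig2 \<Longrightarrow> odd x \<Longrightarrow> x div 2 \<in> Sig1"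
  by (auto simp: ext_alph_def codeS_def codeT_def)

lemma even_letter: "x \<in> ext_alph Sig1 Sig2 \<Longrightarrow> even x \<Longrightarrow> x \<noteq> 0 \<Longrightarrow> x div 2 - 1 \<in> Sig2"
  by (auto simp: ext_alph_def codeS_def codeT_def)

lemma projT_lists: "w \<in> lists (ext_alph Sig1 Sig2) \<Longrightarrow> projT w \<in> lists Sig2"
  by (induction w) (auto dest: even_letter)

lemma ext_async_automaton:
  assumes aut1: "async_automaton Q1 Sig1 t1 o1" and aut2: "async_automaton Q2 Sig2 t2 o2"
  shows "async_automaton (ext_states Q1 Q2) (ext_alph Sig1 Sig2) (ext_trans t1 t2) (ext_out o1 o2)"
  unfolding async_automaton_def
proof (intro conjI ballI)
  show "finite (ext_states Q1 Q2)" "finite (ext_alph Sig1 Sig2)"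
    using assms by (simp_all add: ext_states_def ext_alph_def async_automaton_def)
  fix n x assume n: "n \<in> ext_states Q1 Q2" and x: "x \<in> ext_alph Sig1 Sig2"
  have "ext_trans t1 t2 n x \<in> ext_states Q1 Q2 \<and> set (ext_out o1 o2 n x) \<subseteq> ext_alph Sig1 Sig2"
  proof (cases "even n")
    case True
    then obtain q where q: "q \<in> Q1" "n = 2 * q" using n by (auto simp: ext_states_def)
    have "odd x \<Longrightarrow> t1 q (x div 2) \<in> Q1 \<and> set (o1 q (x div 2)) \<subseteq> Sig1"
      using aut1 q(1) odd_letter[OF x] by (simp add: async_automaton_def)
    then show ?thesis using q x by (auto simp: ext_trans_def ext_out_def ext_states_def ext_alph_def)
  next
    case False
    then obtain p where p: "p \<in> Q2" "n = 2 * p + 1" using n by (auto simp: ext_states_def)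
    have "even x \<Longrightarrow> x \<noteq> 0 \<Longrightarrow> t2 p (x div 2 - 1) \<in> Q2 \<and> set (o2 p (x div 2 - 1)) \<subseteq> Sig2"
      using aut2 p(1) even_letter[OF x] by (simp add: async_automaton_def)
    then show ?thesis using p by (auto simp: ext_trans_def ext_out_def ext_states_def ext_alph_def)
  qed
  then show "ext_trans t1 t2 n x \<in> ext_states Q1 Q2" "set (ext_out o1 o2 n x) \<subseteq> ext_alph Sig1 Sig2"
    by auto
qed

section \<open>Behaviour of the combined automaton\<close>

(* transitions and outputs of two automata; no finiteness is needed to describe the action *)
locale ideal_ext =
  fixes Sig1 :: "nat set" and t1 :: "nat \<Rightarrow> nat \<Rightarrow> nat" and o1 :: "nat \<Rightarrow> nat \<Rightarrow> nat list"
    and Sig2 :: "nat set" and t2 :: "nat \<Rightarrow> nat \<Rightarrow> nat" and o2 :: "nat \<Rightarrow> nat \<Rightarrow> nat list"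
begin

abbreviation "SigN \<equiv> ext_alph Sig1 Sig2"
abbreviation "tN \<equiv> ext_trans t1 t2"
abbreviation "oN \<equiv> ext_out o1 o2"

lemma act_S_state_even: "even n \<Longrightarrow> \<forall>x\<in>set w. even x \<Longrightarrow> act tN oN n w = w"
  by (induction w arbitrary: n) (auto simp: ext_trans_def ext_out_def)

lemma projT_act_S_state: "even n \<Longrightarrow> projT (act tN oN n w) = projT w"
proof (induction w arbitrary: n)
  case (Cons x w)
  then show ?case by (cases "odd x") (auto simp: ext_trans_def ext_out_def codeS_def)
qed simp

lemma act_T_state: "odd n \<Longrightarrow> act tN oN n w = map codeT (act t2 o2 (n div 2) (projT w))"
proof (induction w arbitrary: n)
  case (Cons x w)
  then show ?case by (cases "even x \<and> x \<noteq> 0") (auto simp: ext_trans_def ext_out_def)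
qed simp

lemma act_S_state_codeS:
  "act tN oN (2 * q) (map codeS u @ v) = map codeS (act t1 o1 q u) @ act tN oN (2 * tstar t1 q u) v"
  by (induction u arbitrary: q) (auto simp: ext_trans_def ext_out_def codeS_def)

lemma actL_S_states_odd_letter:
  "odd x \<Longrightarrow> actL tN oN (map (\<lambda>q. 2 * q) qs) (x # w) =
     map codeS (actL t1 o1 qs [x div 2]) @ actL tN oN (map (\<lambda>q. 2 * q) (tL t1 o1 qs (x div 2))) w"
proof (induction qs)
  case Nil
  then show ?case by (simp add: codeS_def)
next
  case (Cons q qs)
  then show ?case by (simp add: act_S_state_codeS)
qed

lemma actL_S_states_even_letter:
  "even x \<Longrightarrow> actL tN oN (map (\<lambda>q. 2 * q) qs) (x # w) = x # actL tN oN (map (\<lambda>q. 2 * q) qs) w"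
  by (induction qs) (auto simp: ext_trans_def ext_out_def)

lemma actL_S_states_codeS:
  "actL tN oN (map (\<lambda>q. 2 * q) qs) (map codeS u) = map codeS (actL t1 o1 qs u)"
  by (induction qs) (auto simp: act_S_state_codeS[where v = "[]", simplified])

lemma actL_S_states_fix_even:
  "\<forall>n\<in>set ns. even n \<Longrightarrow> \<forall>x\<in>set w. even x \<Longrightarrow> actL tN oN ns w = w"
  by (induction ns) (auto simp: act_S_state_even)

lemma projT_actL_S_states: "\<forall>n\<in>set ns. even n \<Longrightarrow> projT (actL tN oN ns w) = projT w"
  by (induction ns) (auto simp: projT_act_S_state)

lemma actL_with_T_state:
  "\<exists>n\<in>set ns. odd n \<Longrightarrow>
     actL tN oN ns w = map codeT (actL t2 o2 (map (\<lambda>n. n div 2) (filter odd ns)) (projT w))"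
proof (induction ns)
  case (Cons n ns)
  show ?case
  proof (cases "\<exists>n\<in>set ns. odd n")
    case True
    then show ?thesis using Cons by (auto simp: act_T_state act_S_state_even even_codeT)
  next
    case False
    then have "filter odd ns = []" by (auto simp: filter_empty_conv)
    then show ?thesis using False Cons.prems by (auto simp: act_T_state projT_actL_S_states)
  qed
qed simp

(* the map of a word of first-automaton states in the combined automaton depends only on the
   map of that word in the first automaton; this makes the embedding of S well defined *)
lemma actL_S_states_determined:
  assumes "\<forall>u\<in>lists Sig1. actL t1 o1 qs u = actL t1 o1 qs' u" and "w \<in> lists SigN"
  shows "actL tN oN (map (\<lambda>q. 2 * q) qs) w = actL tN oN (map (\<lambda>q. 2 * q) qs') w"
  using assms
proof (induction w arbitrary: qs qs')
  case (Cons x w)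
  show ?case
  proof (cases "even x")
    case True
    then show ?thesis using Cons by (simp add: actL_S_states_even_letter)
  next
    case False
    define a where "a = x div 2"
    have a: "a \<in> Sig1" using Cons.prems(2) False odd_letter unfolding a_def by auto
    have first: "actL t1 o1 qs [a] = actL t1 o1 qs' [a]" using Cons.prems(1) a by auto
    have "actL t1 o1 (tL t1 o1 qs a) u = actL t1 o1 (tL t1 o1 qs' a) u" if "u \<in> lists Sig1" for u
    proof -
      have "actL t1 o1 qs (a # u) = actL t1 o1 qs' (a # u)" using Cons.prems(1) a that by auto
      then show ?thesis using first by (subst (asm) (1 2) actL_letter) simp
    qed
    then have "actL tN oN (map (\<lambda>q. 2 * q) (tL t1 o1 qs a)) w = actL tN oN (map (\<lambda>q. 2 * q) (tL t1 o1 qs' a)) w"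
      using Cons.IH Cons.prems(2) by simp
    then show ?thesis using False first by (simp add: actL_S_states_odd_letter a_def[symmetric])
  qed
qed simp

end

section \<open>Embedding the normal ideal extension into the combined automaton semigroup\<close>

locale two_automata = ideal_ext +
  fixes Q1 Q2 :: "nat set"
  assumes aut1: "async_automaton Q1 Sig1 t1 o1"
    and aut2: "async_automaton Q2 Sig2 t2 o2"
begin

abbreviation "QN \<equiv> ext_states Q1 Q2"
abbreviation "C1 \<equiv> aut_sgp_carrier Q1 Sig1 t1 o1"
abbreviation "C2 \<equiv> aut_sgp_carrier Q2 Sig2 t2 o2"
abbreviation "CN \<equiv> aut_sgp_carrier QN SigN tN oN"

lemma autN: "async_automaton QN SigN tN oN"
  using ext_async_automaton[OF aut1 aut2] .

definition liftS :: "(nat list \<Rightarrow> nat list) \<Rightarrow> nat list \<Rightarrow> nat list" where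
  "liftS f = seq_map SigN tN oN
     (map (\<lambda>q. 2 * q) (SOME qs. qs \<noteq> [] \<and> set qs \<subseteq> Q1 \<and> f = seq_map Sig1 t1 o1 qs))"

definition liftT :: "(nat list \<Rightarrow> nat list) \<Rightarrow> nat list \<Rightarrow> nat list" where
  "liftT g = restrict (\<lambda>w. map codeT (g (projT w))) (lists SigN)"

definition nie_embed :: "(nat list \<Rightarrow> nat list) + (nat list \<Rightarrow> nat list) \<Rightarrow> nat list \<Rightarrow> nat list" where
  "nie_embed = case_sum liftS liftT"

(* by actL_S_states_determined, liftS does not depend on the chosen word of states *)
lemma liftS_seq_map:
  assumes "qs \<noteq> []" "set qs \<subseteq> Q1"
  shows "liftS (seq_map Sig1 t1 o1 qs) = seq_map SigN tN oN (map (\<lambda>q. 2 * q) qs)"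
proof -
  let ?P = "\<lambda>qs'. qs' \<noteq> [] \<and> set qs' \<subseteq> Q1 \<and> seq_map Sig1 t1 o1 qs = seq_map Sig1 t1 o1 qs'"
  define qs' where "qs' = (SOME qs'. ?P qs')"
  have "?P qs'" unfolding qs'_def using assms by (intro someI[of ?P qs]) simp
  then have "\<forall>u\<in>lists Sig1. actL t1 o1 qs' u = actL t1 o1 qs u"
    by (metis restrict_apply')
  then have "seq_map SigN tN oN (map (\<lambda>q. 2 * q) qs') = seq_map SigN tN oN (map (\<lambda>q. 2 * q) qs)"
    by (intro ext) (simp add: actL_S_states_determined)
  then show ?thesis unfolding liftS_def qs'_def by (simp add: eq_commute)
qed

lemma liftT_seq_map:
  assumes "ps \<noteq> []"
  shows "liftT (seq_map Sig2 t2 o2 ps) = seq_map SigN tN oN (map (\<lambda>p. 2 * p + 1) ps)"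
proof -
  have "map (\<lambda>n. n div 2) (filter odd (map (\<lambda>p. 2 * p + 1) ps)) = ps"
    by (induction ps) auto
  moreover have "\<exists>n\<in>set (map (\<lambda>p. 2 * p + 1) ps). odd n"
    using assms by (auto simp: neq_Nil_conv)
  ultimately show ?thesis
    unfolding liftT_def by (intro ext) (simp add: projT_lists actL_with_T_state)
qed

lemma liftS_in_carrier:
  assumes "f \<in> C1"
  shows "liftS f \<in> CN"
proof -
  obtain qs where qs: "qs \<noteq> []" "set qs \<subseteq> Q1" "f = seq_map Sig1 t1 o1 qs"
    using assms unfolding carrier_eq[OF aut1] by blast
  moreover have "set (map (\<lambda>q. 2 * q) qs) \<subseteq> QN" using qs(2) by (auto simp: ext_states_def)
  ultimately show ?thesis unfolding carrier_eq[OF autN]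
    by (intro CollectI exI[of _ "map (\<lambda>q. 2 * q) qs"]) (simp add: liftS_seq_map)
qed

lemma liftT_in_carrier:
  assumes "g \<in> C2"
  shows "liftT g \<in> CN"
proof -
  obtain ps where ps: "ps \<noteq> []" "set ps \<subseteq> Q2" "g = seq_map Sig2 t2 o2 ps"
    using assms unfolding carrier_eq[OF aut2] by blast
  moreover have "set (map (\<lambda>p. 2 * p + 1) ps) \<subseteq> QN" using ps(2) by (auto simp: ext_states_def)
  ultimately show ?thesis unfolding carrier_eq[OF autN]
    by (intro CollectI exI[of _ "map (\<lambda>p. 2 * p + 1) ps"]) (simp add: liftT_seq_map)
qed

(* every map of the combined automaton is the image of an element of C1 or of C2, according as
   its word of states contains no second-automaton state or some *)
lemma carrier_in_image: "CN \<subseteq> nie_embed ` (C1 <+> C2)"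
proof
  fix f assume "f \<in> CN"
  then obtain ns where ns: "ns \<noteq> []" "set ns \<subseteq> QN" "f = seq_map SigN tN oN ns"
    unfolding carrier_eq[OF autN] by blast
  show "f \<in> nie_embed ` (C1 <+> C2)"
  proof (cases "\<exists>n\<in>set ns. odd n")
    case False
    define qs where "qs = map (\<lambda>n. n div 2) ns"
    have ns_qs: "ns = map (\<lambda>q. 2 * q) qs"
      unfolding qs_def using False by (induction ns) auto
    have "set qs \<subseteq> Q1"
      using ns(2) False even_state unfolding qs_def by auto
    moreover have "qs \<noteq> []" using ns(1) unfolding qs_def by simp
    ultimately have "seq_map Sig1 t1 o1 qs \<in> C1" "liftS (seq_map Sig1 t1 o1 qs) = f"
      using ns(3) liftS_seq_map ns_qs unfolding carrier_eq[OF aut1] by auto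
    then show ?thesis unfolding nie_embed_def by force
  next
    case True
    define ps where "ps = map (\<lambda>n. n div 2) (filter odd ns)"
    have "set ps \<subseteq> Q2" "ps \<noteq> []"
      using ns(2) True odd_state unfolding ps_def by (auto simp: filter_empty_conv)
    moreover have "liftT (seq_map Sig2 t2 o2 ps) = f"
      unfolding liftT_def ns(3) ps_def using True by (intro ext) (simp add: projT_lists actL_with_T_state)
    ultimately have "seq_map Sig2 t2 o2 ps \<in> C2" "liftT (seq_map Sig2 t2 o2 ps) = f"
      unfolding carrier_eq[OF aut2] by auto
    then show ?thesis unfolding nie_embed_def by force
  qed
qed

lemma nie_embed_image: "nie_embed ` (C1 <+> C2) = CN"
  using carrier_in_image liftS_in_carrier liftT_in_carrier unfolding nie_embed_def by auto

(* the one-letter word # distinguishes the two kinds of maps *)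
lemma liftS_separator: "f \<in> C1 \<Longrightarrow> liftS f [0] = [0]"
  by (auto simp: carrier_eq[OF aut1] liftS_seq_map ext_alph_def actL_S_states_fix_even)

lemma liftT_separator: "g \<in> C2 \<Longrightarrow> liftT g [0] = []"
  by (auto simp: carrier_eq[OF aut2] liftT_def ext_alph_def)

(* on coded letters of Sig1 the lift of f acts as f, so f can be read off *)
lemma liftS_codeS: "f \<in> C1 \<Longrightarrow> u \<in> lists Sig1 \<Longrightarrow> liftS f (map codeS u) = map codeS (f u)"
  by (auto simp: carrier_eq[OF aut1] liftS_seq_map codeS_in_ext_alph actL_S_states_codeS)

lemma liftT_codeT: "u \<in> lists Sig2 \<Longrightarrow> liftT g (map codeT u) = map codeT (g u)"
  by (simp add: liftT_def codeT_in_ext_alph)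

lemma inj_codeS: "inj codeS" and inj_codeT: "inj codeT"
  by (auto simp: inj_def codeS_def codeT_def)

(* nie_embed is injective: # separates the summands, the coded letters separate within them *)
lemma nie_embed_inj: "inj_on nie_embed (C1 <+> C2)"
proof (rule inj_onI)
  fix x y assume x: "x \<in> C1 <+> C2" and y: "y \<in> C1 <+> C2" and eq: "nie_embed x = nie_embed y"
  have "nie_embed x [0] = nie_embed y [0]" using eq by simp
  then consider (S) f f' where "x = Inl f" "y = Inl f'" "f \<in> C1" "f' \<in> C1"
    | (T) g g' where "x = Inr g" "y = Inr g'" "g \<in> C2" "g' \<in> C2"
    using x y by (auto simp: nie_embed_def liftS_separator liftT_separator)
  then show "x = y"
  proof cases
    case S
    have "f u = f' u" if "u \<in> lists Sig1" for u
      using eq S liftS_codeS[of _ u] that inj_map_eq_map[OF inj_codeS] by (metis nie_embed_def sum.case(1))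
    then have "f = f'"
      by (rule extensionalityI[OF carrier_extensional[OF aut1 S(3)] carrier_extensional[OF aut1 S(4)]])
    then show ?thesis using S by simp
  next
    case T
    have "g u = g' u" if "u \<in> lists Sig2" for u
      using eq T liftT_codeT[of u] that inj_map_eq_map[OF inj_codeT] by (metis nie_embed_def sum.case(2))
    then have "g = g'"
      by (rule extensionalityI[OF carrier_extensional[OF aut2 T(3)] carrier_extensional[OF aut2 T(4)]])
    then show ?thesis using T by simp
  qed
qed

lemma liftS_compose:
  assumes "f \<in> C1" "f' \<in> C1"
  shows "liftS (compose (lists Sig1) f f') = compose (lists SigN) (liftS f) (liftS f')"
proof -
  obtain qs qs' where qs: "qs \<noteq> []" "set qs \<subseteq> Q1" "f = seq_map Sig1 t1 o1 qs"
    and qs': "qs' \<noteq> []" "set qs' \<subseteq> Q1" "f' = seq_map Sig1 t1 o1 qs'"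
    using assms unfolding carrier_eq[OF aut1] by blast
  have "set (map (\<lambda>q. 2 * q) qs') \<subseteq> QN" using qs'(2) by (auto simp: ext_states_def)
  then show ?thesis
    using qs qs' by (simp add: compose_seq_map[OF aut1] compose_seq_map[OF autN] liftS_seq_map)
qed

lemma liftT_compose:
  assumes "\<And>u. u \<in> lists Sig2 \<Longrightarrow> g' u \<in> lists Sig2"
  shows "liftT (compose (lists Sig2) g g') = compose (lists SigN) (liftT g) (liftT g')"
  unfolding liftT_def using assms
  by (subst compose_restrict) (auto simp: compose_def projT_lists codeT_in_ext_alph)

lemma liftS_liftT:
  assumes "f \<in> C1" "g \<in> C2"
  shows "compose (lists SigN) (liftS f) (liftT g) = liftT g"
proof -
  obtain qs where qs: "qs \<noteq> []" "set qs \<subseteq> Q1" "f = seq_map Sig1 t1 o1 qs"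
    using assms(1) unfolding carrier_eq[OF aut1] by blast
  have "map codeT (g (projT w)) \<in> lists SigN" if "w \<in> lists SigN" for w
    using that by (simp add: codeT_in_ext_alph carrier_lists[OF aut2 assms(2)] projT_lists)
  then show ?thesis unfolding qs(3) liftS_seq_map[OF qs(1,2)] liftT_def
    by (subst compose_restrict) (auto simp: actL_S_states_fix_even even_codeT)
qed

lemma liftT_liftS:
  assumes "f \<in> C1"
  shows "compose (lists SigN) (liftT g) (liftS f) = liftT g"
proof -
  obtain qs where qs: "qs \<noteq> []" "set qs \<subseteq> Q1" "f = seq_map Sig1 t1 o1 qs"
    using assms unfolding carrier_eq[OF aut1] by blast
  have "set (map (\<lambda>q. 2 * q) qs) \<subseteq> QN" using qs(2) by (auto simp: ext_states_def)
  then show ?thesis unfolding qs(3) liftS_seq_map[OF qs(1,2)] liftT_def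
    by (subst compose_restrict) (auto simp: actL_lists[OF autN] projT_actL_S_states)
qed

lemma nie_embed_hom:
  assumes "x \<in> C1 <+> C2" "y \<in> C1 <+> C2"
  shows "nie_embed (nie_mult (\<lambda>f g. compose (lists Sig1) f g) (\<lambda>f g. compose (lists Sig2) f g) x y)
           = compose (lists SigN) (nie_embed x) (nie_embed y)"
  using assms
  by (auto simp: nie_embed_def liftS_compose liftT_compose carrier_lists[OF aut2]
      liftS_liftT liftT_liftS)

lemma nie_embed_iso:
  "sg_iso (C1 <+> C2) (nie_mult (\<lambda>f g. compose (lists Sig1) f g) (\<lambda>f g. compose (lists Sig2) f g))
     CN (\<lambda>f g. compose (lists SigN) f g) nie_embed"
  unfolding sg_iso_def bij_betw_def using nie_embed_inj nie_embed_image nie_embed_hom by blast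

end

theorem mainTheorem16:
  fixes S :: "'a set" and fS :: "'a \<Rightarrow> 'a \<Rightarrow> 'a"
    and T :: "'b set" and fT :: "'b \<Rightarrow> 'b \<Rightarrow> 'b"
  assumes "is_async_aut_sgp S fS"
      and "is_async_aut_sgp T fT"
  shows "is_async_aut_sgp (S <+> T) (nie_mult fS fT)"
proof -
  obtain Q1 Sig1 t1 o1 h1 where aut1: "async_automaton Q1 Sig1 t1 o1"
    and iso1: "sg_iso S fS (aut_sgp_carrier Q1 Sig1 t1 o1) (\<lambda>x y. compose (lists Sig1) x y) h1"
    using assms(1) unfolding is_async_aut_sgp_def by blast
  obtain Q2 Sig2 t2 o2 h2 where aut2: "async_automaton Q2 Sig2 t2 o2"
    and iso2: "sg_iso T fT (aut_sgp_carrier Q2 Sig2 t2 o2) (\<lambda>x y. compose (lists Sig2) x y) h2"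
    using assms(2) unfolding is_async_aut_sgp_def by blast
  interpret two_automata Sig1 t1 o1 Sig2 t2 o2 Q1 Q2
    using aut1 aut2 by unfold_locales
  have "sg_iso (S <+> T) (nie_mult fS fT) CN (\<lambda>x y. compose (lists SigN) x y) (nie_embed \<circ> map_sum h1 h2)"
    using sg_iso_trans[OF sg_iso_nie[OF iso1 iso2] nie_embed_iso] .
  then show ?thesis
    unfolding is_async_aut_sgp_def using autN by blast
qed

end
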